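(* Let $(\mathcal{M}^n,g)$ be a mixed super quasi-Einstein manifold (notation as in the context) which is conformal Ricci pseudosymmetric, i.e. there is a function $F_{\mathrm{Ric}}$ on $U_{\mathrm{Ric}}=\{x\in\mathcal{M}:\mathrm{Ric}\neq\frac{r}{n}g \text{ at } x\}$ such that on $U_{\mathrm{Ric}}$, for all $X,Y,Z,W$, $\mathrm{Ric}(C(X,Y)Z,W)+\mathrm{Ric}(Z,C(X,Y)W)=F_{\mathrm{Ric}}\big(g(Y,Z)\mathrm{Ric}(X,W)-g(X,Z)\mathrm{Ric}(Y,W)+g(Y,W)\mathrm{Ric}(X,Z)-g(X,W)\mathrm{Ric}(Y,Z)\big)$. Put $m=-\frac{(n-2)R(\xi_2,\xi_1,\xi_1,\xi_2)}{\Psi_5}+\mathcal{D}(\xi_2,\xi_2)$ and define the 1-form $\mathcal{E}(X)=\Big(R(\xi_2,\xi_1,\xi_1,\xi_2)-\frac{\Psi_5}{n-2}\mathcal{D}(\xi_2,\xi_2)\Big)\mathcal{B}(X)+\frac{\Psi_5}{n-2}\mathcal{D}(X,\xi_2)$. Then on $U_{\mathrm{Ric}}$: (1) if $m$ is not an eigenvalue of $\mathcal{D}$ corresponding to the eigenvector $\xi_2$, then $R(X,Y,\xi_1,\xi_2)=\mathcal{E}(X)\mathcal{A}(Y)-\mathcal{A}(X)\mathcal{E}(Y)$ for all $X,Y$; (2) if $m$ is an eigenvalue of $\mathcal{D}$ corresponding to the eigenvector $\xi_2$, then $R(X,Y,\xi_1,\xi_2)=0$ for all $X,Y$.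
   Context: $(\mathcal{M}^n,g)$, $n\ge 3$, is a non-flat Riemannian manifold with Levi-Civita connection $\nabla$, curvature $R(X,Y)Z=\nabla_X\nabla_YZ-\nabla_Y\nabla_XZ-\nabla_{[X,Y]}Z$, $R(X,Y,Z,W)=g(R(X,Y)Z,W)$, Ricci tensor $\mathrm{Ric}(Y,Z)=\operatorname{trace}(X\mapsto R(X,Y)Z)$, Ricci operator $Q$ ($\mathrm{Ric}(X,Y)=g(QX,Y)$), scalar curvature $r$. The conformal curvature tensor is $C(X,Y)Z=R(X,Y)Z-\frac{1}{n-2}\big(\mathrm{Ric}(Y,Z)X-\mathrm{Ric}(X,Z)Y+g(Y,Z)QX-g(X,Z)QY\big)+\frac{r}{(n-1)(n-2)}\big(g(Y,Z)X-g(X,Z)Y\big)$. $\mathcal{M}$ is a mixed super quasi-Einstein manifold if $\mathrm{Ric}$ is not identically zero and $\mathrm{Ric}(X,Y)=\Psi_1 g(X,Y)+\Psi_2\mathcal{A}(X)\mathcal{A}(Y)+\Psi_3\mathcal{B}(X)\mathcal{B}(Y)+\Psi_4(\mathcal{A}(X)\mathcal{B}(Y)+\mathcal{B}(X)\mathcal{A}(Y))+\Psi_5\mathcal{D}(X,Y)$, where $\Psi_1,\dots,\Psi_5$ are smooth functions with $\Psi_2,\Psi_3,\Psi_4,\Psi_5\neq 0$; $\xi_1,\xi_2$ are vector fields with $g(\xi_1,\xi_1)=g(\xi_2,\xi_2)=1$, $g(\xi_1,\xi_2)=0$; $\mathcal{A}(X)=g(X,\xi_1)$, $\mathcal{B}(X)=g(X,\xi_2)$;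 $\mathcal{D}$ is a symmetric trace-free $(0,2)$-tensor with $\mathcal{D}(X,\xi_1)=0$ for all $X$. A number/function $b$ is an eigenvalue of $\mathcal{D}$ corresponding to the eigenvector $U$ if $\mathcal{D}(X,U)=b\,g(X,U)$ for all $X$. *)

theory Defs
  imports "HOL-Analysis.Analysis"
begin

text \<open>Pointwise (tangent space at a point) setting. The tangent space is a finite
dimensional real inner product space 'v (euclidean_space), g = inner product.
A curvature operator R X Y Z, i.e. R(X,Y)Z.\<close>

definition alg_curv :: "('v::euclidean_space \<Rightarrow> 'v \<Rightarrow> 'v \<Rightarrow> 'v) \<Rightarrow> bool" where
  "alg_curv R \<longleftrightarrow>
     (\<forall>Y Z. linear (\<lambda>X. R X Y Z)) \<and> (\<forall>X Z. linear (\<lambda>Y. R X Y Z)) \<and>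
     (\<forall>X Y. linear (\<lambda>Z. R X Y Z)) \<and>
     (\<forall>X Y Z. R X Y Z = - R Y X Z) \<and>
     (\<forall>X Y Z W. inner (R X Y Z) W = - inner (R X Y W) Z) \<and>
     (\<forall>X Y Z. R X Y Z + R Y Z X + R Z X Y = 0)"

definition Rt :: "('v::euclidean_space \<Rightarrow> 'v \<Rightarrow> 'v \<Rightarrow> 'v) \<Rightarrow> 'v \<Rightarrow> 'v \<Rightarrow> 'v \<Rightarrow> 'v \<Rightarrow> real" where
  "Rt R X Y Z W = inner (R X Y Z) W"

definition Ric :: "('v::euclidean_space \<Rightarrow> 'v \<Rightarrow> 'v \<Rightarrow> 'v) \<Rightarrow> 'v \<Rightarrow> 'v \<Rightarrow> real" where
  "Ric R Y Z = (\<Sum>b\<in>Basis. inner (R b Y Z) b)"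

definition Qop :: "('v::euclidean_space \<Rightarrow> 'v \<Rightarrow> 'v \<Rightarrow> 'v) \<Rightarrow> 'v \<Rightarrow> 'v" where
  "Qop R X = (\<Sum>b\<in>Basis. Ric R X b *\<^sub>R b)"

definition scal :: "('v::euclidean_space \<Rightarrow> 'v \<Rightarrow> 'v \<Rightarrow> 'v) \<Rightarrow> real" where
  "scal R = (\<Sum>b\<in>Basis. Ric R b b)"

definition conf :: "('v::euclidean_space \<Rightarrow> 'v \<Rightarrow> 'v \<Rightarrow> 'v) \<Rightarrow> 'v \<Rightarrow> 'v \<Rightarrow> 'v \<Rightarrow> 'v" where
  "conf R X Y Z =
     (let n = real DIM('v) in
      R X Y Z
      - (1 / (n - 2)) *\<^sub>R (Ric R Y Z *\<^sub>R X - Ric R X Z *\<^sub>R Y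
                            + inner Y Z *\<^sub>R Qop R X - inner X Z *\<^sub>R Qop R Y)
      + (scal R / ((n - 1) * (n - 2))) *\<^sub>R (inner Y Z *\<^sub>R X - inner X Z *\<^sub>R Y))"

definition msqe ::
  "('v::euclidean_space \<Rightarrow> 'v \<Rightarrow> 'v \<Rightarrow> 'v) \<Rightarrow> real \<Rightarrow> real \<Rightarrow> real \<Rightarrow> real \<Rightarrow> real
     \<Rightarrow> 'v \<Rightarrow> 'v \<Rightarrow> ('v \<Rightarrow> 'v \<Rightarrow> real) \<Rightarrow> bool" where
  "msqe R \<Psi>1 \<Psi>2 \<Psi>3 \<Psi>4 \<Psi>5 \<xi>1 \<xi>2 D \<longleftrightarrow>
     (\<exists>X Y. Ric R X Y \<noteq> 0) \<and>
     \<Psi>2 \<noteq> 0 \<and> \<Psi>3 \<noteq> 0 \<and> \<Psi>4 \<noteq> 0 \<and> \<Psi>5 \<noteq> 0 \<and>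
     inner \<xi>1 \<xi>1 = 1 \<and> inner \<xi>2 \<xi>2 = 1 \<and> inner \<xi>1 \<xi>2 = 0 \<and>
     bilinear D \<and> (\<forall>X Y. D X Y = D Y X) \<and> (\<Sum>b\<in>Basis. D b b) = 0 \<and>
     (\<forall>X. D X \<xi>1 = 0) \<and>
     (\<forall>X Y. Ric R X Y = \<Psi>1 * inner X Y + \<Psi>2 * inner X \<xi>1 * inner Y \<xi>1
                 + \<Psi>3 * inner X \<xi>2 * inner Y \<xi>2
                 + \<Psi>4 * (inner X \<xi>1 * inner Y \<xi>2 + inner X \<xi>2 * inner Y \<xi>1)
                 + \<Psi>5 * D X Y)"

definition in_URic :: "('v::euclidean_space \<Rightarrow> 'v \<Rightarrow> 'v \<Rightarrow> 'v) \<Rightarrow> bool" where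
  "in_URic R \<longleftrightarrow> \<not> (\<forall>X Y. Ric R X Y = scal R / real DIM('v) * inner X Y)"

definition conf_ric_pseudosym :: "('v::euclidean_space \<Rightarrow> 'v \<Rightarrow> 'v \<Rightarrow> 'v) \<Rightarrow> real \<Rightarrow> bool" where
  "conf_ric_pseudosym R F \<longleftrightarrow>
     (\<forall>X Y Z W. Ric R (conf R X Y Z) W + Ric R Z (conf R X Y W) =
        F * (inner Y Z * Ric R X W - inner X Z * Ric R Y W
             + inner Y W * Ric R X Z - inner X W * Ric R Y Z))"

definition is_eigen :: "('v::euclidean_space \<Rightarrow> 'v \<Rightarrow> real) \<Rightarrow> real \<Rightarrow> 'v \<Rightarrow> bool" where
  "is_eigen D b U \<longleftrightarrow> (\<forall>X. D X U = b * inner X U)"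

end

theory Submission
  imports Defs
begin

text \<open>Put A = g(-,\<xi>1), B = g(-,\<xi>2). Since Ric(V,\<xi>1) = (\<Psi>1 + \<Psi>2) A(V) + \<Psi>4 B(V) with
  \<Psi>4 \<noteq> 0, and g(C(X,Y)\<xi>1,\<xi>1) = 0, the pseudosymmetry condition with Z = W = \<xi>1 yields
  C(X,Y,\<xi>1,\<xi>2) = F (B(X) A(Y) - A(X) B(Y)). Expanding the conformal tensor turns this into
  R(X,Y,\<xi>1,\<xi>2) = k (B(X) A(Y) - A(X) B(Y)) + \<Psi>5/(n-2) (D(X,\<xi>2) A(Y) - A(X) D(Y,\<xi>2))
  for a scalar k, and evaluating at (\<xi>2,\<xi>1) gives k = R(\<xi>2,\<xi>1,\<xi>1,\<xi>2) - \<Psi>5/(n-2) D(\<xi>2,\<xi>2),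
  i.e. R(X,Y,\<xi>1,\<xi>2) = E(X) A(Y) - A(X) E(Y). When D(-,\<xi>2) = m B, the choice of m makes
  E vanish.\<close>

lemma Ric_linear_right:
  assumes "alg_curv R"
  shows "linear (Ric R X)"
proof -
  have "linear (\<lambda>V. R b X V)" for b
    using assms unfolding alg_curv_def by blast
  then have "linear (\<lambda>V. inner (R b X V) b)" for b
    using linear_compose[OF _ bounded_linear.linear[OF bounded_linear_inner_left]]
    unfolding o_def by blast
  then show ?thesis
    unfolding Ric_def by (intro linear_compose_sum) auto
qed

lemma inner_Qop:
  assumes "alg_curv R"
  shows "inner (Qop R X) V = Ric R X V"
  using Linear_Algebra.linear_componentwise[OF Ric_linear_right[OF assms], where x=V and j=1]
  unfolding Qop_def inner_sum_left by (simp add: inner_commute mult.commute)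

lemma inner_conf:
  fixes R :: "'v::euclidean_space \<Rightarrow> 'v \<Rightarrow> 'v \<Rightarrow> 'v"
  assumes "alg_curv R"
  shows "inner (conf R X Y Z) V = Rt R X Y Z V
    - (Ric R Y Z * inner X V - Ric R X Z * inner Y V
       + inner Y Z * Ric R X V - inner X Z * Ric R Y V) / (real DIM('v) - 2)
    + scal R * (inner Y Z * inner X V - inner X Z * inner Y V)
       / ((real DIM('v) - 1) * (real DIM('v) - 2))"
  by (simp add: conf_def Let_def Rt_def inner_diff_left inner_add_left inner_Qop[OF assms])

lemma inner_conf_self:
  assumes "alg_curv R"
  shows "inner (conf R X Y Z) Z = 0"
proof -
  have "inner (R X Y Z) Z = - inner (R X Y Z) Z"
    using assms unfolding alg_curv_def by blast
  then have "Rt R X Y Z Z = 0"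
    unfolding Rt_def by linarith
  then show ?thesis
    unfolding inner_conf[OF assms] by (simp add: algebra_simps)
qed

lemma conf_ric_pseudosym_inner_conf:
  assumes "alg_curv R" and "conf_ric_pseudosym R F" and "c \<noteq> 0"
    and Ric_U: "\<And>V. Ric R V U = a * inner V U + c * inner V U'"
    and Ric_U': "\<And>V. Ric R U V = a * inner V U + c * inner V U'"
  shows "inner (conf R X Y U) U' = F * (inner X U' * inner Y U - inner X U * inner Y U')"
proof -
  have "Ric R (conf R X Y U) U + Ric R U (conf R X Y U) =
      F * (inner Y U * Ric R X U - inner X U * Ric R Y U
           + inner Y U * Ric R X U - inner X U * Ric R Y U)"
    using assms(2) unfolding conf_ric_pseudosym_def by blast
  then have "2 * c * inner (conf R X Y U) U' =
      2 * c * (F * (inner X U' * inner Y U - inner X U * inner Y U'))"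
    by (simp add: Ric_U Ric_U' inner_conf_self[OF assms(1)] algebra_simps)
  then show ?thesis
    using \<open>c \<noteq> 0\<close> by simp
qed

lemma
  assumes "msqe R \<Psi>1 \<Psi>2 \<Psi>3 \<Psi>4 \<Psi>5 \<xi>1 \<xi>2 D"
  shows msqe_Ric_xi1: "Ric R V \<xi>1 = (\<Psi>1 + \<Psi>2) * inner V \<xi>1 + \<Psi>4 * inner V \<xi>2"
    and msqe_xi1_Ric: "Ric R \<xi>1 V = (\<Psi>1 + \<Psi>2) * inner V \<xi>1 + \<Psi>4 * inner V \<xi>2"
    and msqe_Ric_xi2:
      "Ric R V \<xi>2 = (\<Psi>1 + \<Psi>3) * inner V \<xi>2 + \<Psi>4 * inner V \<xi>1 + \<Psi>5 * D V \<xi>2"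
proof -
  note msqe = assms[unfolded msqe_def]
  have "D \<xi>1 V = 0"
    using msqe by metis
  then show "Ric R V \<xi>1 = (\<Psi>1 + \<Psi>2) * inner V \<xi>1 + \<Psi>4 * inner V \<xi>2"
    and "Ric R \<xi>1 V = (\<Psi>1 + \<Psi>2) * inner V \<xi>1 + \<Psi>4 * inner V \<xi>2"
    and "Ric R V \<xi>2 = (\<Psi>1 + \<Psi>3) * inner V \<xi>2 + \<Psi>4 * inner V \<xi>1 + \<Psi>5 * D V \<xi>2"
    using msqe by (auto simp: inner_commute algebra_simps)
qed

lemma msqe_Rt_xi1_xi2:
  fixes R :: "'v::euclidean_space \<Rightarrow> 'v \<Rightarrow> 'v \<Rightarrow> 'v"
  assumes "alg_curv R" and msqe: "msqe R \<Psi>1 \<Psi>2 \<Psi>3 \<Psi>4 \<Psi>5 \<xi>1 \<xi>2 D"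
    and "conf_ric_pseudosym R F"
  defines "n \<equiv> real DIM('v)"
  shows "Rt R X Y \<xi>1 \<xi>2 =
      (F + (2 * \<Psi>1 + \<Psi>2 + \<Psi>3) / (n - 2) - scal R / ((n - 1) * (n - 2)))
        * (inner Y \<xi>1 * inner X \<xi>2 - inner X \<xi>1 * inner Y \<xi>2)
    + \<Psi>5 / (n - 2) * (D X \<xi>2 * inner Y \<xi>1 - inner X \<xi>1 * D Y \<xi>2)"
proof -
  define W where "W = inner Y \<xi>1 * inner X \<xi>2 - inner X \<xi>1 * inner Y \<xi>2"
  define \<Delta> where "\<Delta> = D X \<xi>2 * inner Y \<xi>1 - inner X \<xi>1 * D Y \<xi>2"
  let ?N = "Ric R Y \<xi>1 * inner X \<xi>2 - Ric R X \<xi>1 * inner Y \<xi>2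
    + inner Y \<xi>1 * Ric R X \<xi>2 - inner X \<xi>1 * Ric R Y \<xi>2"
  have "\<Psi>4 \<noteq> 0"
    using msqe unfolding msqe_def by blast
  then have conf_eq: "inner (conf R X Y \<xi>1) \<xi>2 = F * W"
    unfolding W_def mult.commute[of "inner Y \<xi>1"]
    by (rule conf_ric_pseudosym_inner_conf[OF assms(1,3) _ msqe_Ric_xi1[OF msqe] msqe_xi1_Ric[OF msqe]])
  have N_eq: "?N = (2 * \<Psi>1 + \<Psi>2 + \<Psi>3) * W + \<Psi>5 * \<Delta>"
    by (simp add: W_def \<Delta>_def msqe_Ric_xi1[OF msqe] msqe_Ric_xi2[OF msqe] algebra_simps)
  have "Rt R X Y \<xi>1 \<xi>2 = inner (conf R X Y \<xi>1) \<xi>2 + ?N / (n - 2) - scal R * W / ((n - 1) * (n - 2))"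
    using inner_conf[OF assms(1), of X Y \<xi>1 \<xi>2] unfolding W_def n_def by linarith
  also have "\<dots> = F * W + ((2 * \<Psi>1 + \<Psi>2 + \<Psi>3) * W + \<Psi>5 * \<Delta>) / (n - 2)
      - scal R * W / ((n - 1) * (n - 2))"
    by (simp only: conf_eq N_eq)
  also have "\<dots> = (F + (2 * \<Psi>1 + \<Psi>2 + \<Psi>3) / (n - 2) - scal R / ((n - 1) * (n - 2))) * W
      + \<Psi>5 / (n - 2) * \<Delta>"
    by (simp add: add_divide_distrib diff_divide_distrib algebra_simps)
  finally show ?thesis
    unfolding W_def \<Delta>_def .
qed

lemma msqe_Rt_xi1_xi2_eq_form:
  fixes R :: "'v::euclidean_space \<Rightarrow> 'v \<Rightarrow> 'v \<Rightarrow> 'v"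
  assumes "alg_curv R" and msqe: "msqe R \<Psi>1 \<Psi>2 \<Psi>3 \<Psi>4 \<Psi>5 \<xi>1 \<xi>2 D"
    and "conf_ric_pseudosym R F"
  defines "c \<equiv> \<Psi>5 / (real DIM('v) - 2)"
  shows "Rt R X Y \<xi>1 \<xi>2 =
      ((Rt R \<xi>2 \<xi>1 \<xi>1 \<xi>2 - c * D \<xi>2 \<xi>2) * inner X \<xi>2 + c * D X \<xi>2) * inner Y \<xi>1
    - inner X \<xi>1 * ((Rt R \<xi>2 \<xi>1 \<xi>1 \<xi>2 - c * D \<xi>2 \<xi>2) * inner Y \<xi>2 + c * D Y \<xi>2)"
proof -
  define k where "k = F + (2 * \<Psi>1 + \<Psi>2 + \<Psi>3) / (real DIM('v) - 2)
    - scal R / ((real DIM('v) - 1) * (real DIM('v) - 2))"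
  have Rt_eq: "Rt R X Y \<xi>1 \<xi>2 = k * (inner Y \<xi>1 * inner X \<xi>2 - inner X \<xi>1 * inner Y \<xi>2)
      + c * (D X \<xi>2 * inner Y \<xi>1 - inner X \<xi>1 * D Y \<xi>2)" for X Y
    unfolding k_def c_def by (rule msqe_Rt_xi1_xi2[OF assms(1-3)])
  have "inner \<xi>1 \<xi>1 = 1" "inner \<xi>2 \<xi>2 = 1" "inner \<xi>2 \<xi>1 = 0" "D \<xi>1 \<xi>2 = 0"
    using msqe unfolding msqe_def by (auto simp: inner_commute)
  then have "Rt R \<xi>2 \<xi>1 \<xi>1 \<xi>2 = k + c * D \<xi>2 \<xi>2"
    using Rt_eq[of \<xi>2 \<xi>1] by simp
  then show ?thesis
    using Rt_eq[of X Y] by (simp add: algebra_simps)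
qed

lemma is_eigen_form_eq_zero:
  fixes c \<rho> :: real
  assumes "c \<noteq> 0" and "is_eigen D (- \<rho> / c + D U U) U"
  shows "(\<rho> - c * D U U) * inner X U + c * D X U = 0"
  using assms unfolding is_eigen_def by (simp add: field_simps)

theorem mainTheorem3:
  fixes R :: "'v::euclidean_space \<Rightarrow> 'v \<Rightarrow> 'v \<Rightarrow> 'v"
    and \<Psi>1 \<Psi>2 \<Psi>3 \<Psi>4 \<Psi>5 F :: real
    and \<xi>1 \<xi>2 :: 'v
    and D :: "'v \<Rightarrow> 'v \<Rightarrow> real"
  assumes "DIM('v) \<ge> 3"
    and "alg_curv R"
    and "msqe R \<Psi>1 \<Psi>2 \<Psi>3 \<Psi>4 \<Psi>5 \<xi>1 \<xi>2 D"
    and "in_URic R"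
    and "conf_ric_pseudosym R F"
  shows "(let n = real DIM('v);
              m = - ((n - 2) * Rt R \<xi>2 \<xi>1 \<xi>1 \<xi>2) / \<Psi>5 + D \<xi>2 \<xi>2;
              E = (\<lambda>X. (Rt R \<xi>2 \<xi>1 \<xi>1 \<xi>2 - \<Psi>5 / (n - 2) * D \<xi>2 \<xi>2) * inner X \<xi>2
                         + \<Psi>5 / (n - 2) * D X \<xi>2)
          in (\<not> is_eigen D m \<xi>2 \<longrightarrow>
                (\<forall>X Y. Rt R X Y \<xi>1 \<xi>2 = E X * inner Y \<xi>1 - inner X \<xi>1 * E Y)) \<and>
             (is_eigen D m \<xi>2 \<longrightarrow> (\<forall>X Y. Rt R X Y \<xi>1 \<xi>2 = 0)))"
proof -
  define c where "c = \<Psi>5 / (real DIM('v) - 2)"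
  define \<rho> where "\<rho> = Rt R \<xi>2 \<xi>1 \<xi>1 \<xi>2"
  define E where "E X = (\<rho> - c * D \<xi>2 \<xi>2) * inner X \<xi>2 + c * D X \<xi>2" for X
  have "c \<noteq> 0"
    using assms(1,3) unfolding c_def msqe_def by auto
  have m_eq: "- ((real DIM('v) - 2) * \<rho>) / \<Psi>5 = - \<rho> / c"
    by (simp add: c_def)
  have form: "Rt R X Y \<xi>1 \<xi>2 = E X * inner Y \<xi>1 - inner X \<xi>1 * E Y" for X Y
    unfolding E_def \<rho>_def c_def by (rule msqe_Rt_xi1_xi2_eq_form[OF assms(2,3,5)])
  have "E X = 0" if "is_eigen D (- \<rho> / c + D \<xi>2 \<xi>2) \<xi>2" for X
    unfolding E_def using is_eigen_form_eq_zero[OF \<open>c \<noteq> 0\<close> that] .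
  with form show ?thesis
    unfolding Let_def m_eq \<rho>_def[symmetric] c_def[symmetric] E_def[symmetric] by simp
qed

end
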